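(* Let $\beta>0$, $k>0$, $u_0<0$, $\Phi(u)=\beta\left(-\frac{u^4}{4}+\frac{k+u_0}{3}u^3-\frac{ku_0}{2}u^2\right)$, and let $\delta$ be the involution defined in the context. Then (i) if $-k<u_0<0$, $u+\delta(u)<0$ for all $u\in(0,u_1)$; (ii) if $u_0<-k$, $u+\delta(u)>0$ for all $u\in(0,k)$.
   Context: Case $-k<u_0<0$: $u_1$ is the unique point of $(0,k)$ with $\Phi(u_1)=\Phi(u_0)$, and for $u\in(0,u_1)$, $\delta(u)$ is the unique $w\in(u_0,0)$ with $\Phi(w)=\Phi(u)$. Case $u_0<-k$: $w_2$ is the unique point of $(u_0,0)$ with $\Phi(w_2)=\Phi(k)$, and for $u\in(0,k)$, $\delta(u)$ is the unique $w\in(w_2,0)$ with $\Phi(w)=\Phi(u)$. *)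

theory Defs
  imports Complex_Main
begin

definition Phi :: "real \<Rightarrow> real \<Rightarrow> real \<Rightarrow> real \<Rightarrow> real" where
  "Phi \<beta> k u0 u = \<beta> * (- (u ^ 4) / 4 + (k + u0) / 3 * u ^ 3 - k * u0 / 2 * u ^ 2)"

text \<open>Case -k < u0 < 0: u1 is the unique point of (0,k) with Phi u1 = Phi u0.\<close>
definition u1 :: "real \<Rightarrow> real \<Rightarrow> real \<Rightarrow> real" where
  "u1 \<beta> k u0 = (THE u. 0 < u \<and> u < k \<and> Phi \<beta> k u0 u = Phi \<beta> k u0 u0)"

text \<open>Case u0 < -k: w2 is the unique point of (u0,0) with Phi w2 = Phi k.\<close>
definition w2 :: "real \<Rightarrow> real \<Rightarrow> real \<Rightarrow> real" where
  "w2 \<beta> k u0 = (THE w. u0 < w \<and> w < 0 \<and> Phi \<beta> k u0 w = Phi \<beta> k u0 k)"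

text \<open>The involution delta (only meaningful for u in (0,u1), resp. (0,k)).\<close>
definition delta :: "real \<Rightarrow> real \<Rightarrow> real \<Rightarrow> real \<Rightarrow> real" where
  "delta \<beta> k u0 u =
     (if - k < u0
      then (THE w. u0 < w \<and> w < 0 \<and> Phi \<beta> k u0 w = Phi \<beta> k u0 u)
      else (THE w. w2 \<beta> k u0 < w \<and> w < 0 \<and> Phi \<beta> k u0 w = Phi \<beta> k u0 u))"

end

theory Submission
  imports Defs
begin

text \<open>Since \<open>\<Phi>'(u) = \<beta> u (k - u) (u - u\<^sub>0)\<close>, \<open>\<Phi>\<close> increases on \<open>[0, k]\<close> and decreases on
  \<open>[u\<^sub>0, 0]\<close>; this makes \<open>u\<^sub>1\<close>, \<open>w\<^sub>2\<close> and \<open>\<delta>\<close> well defined. The sign of \<open>u + \<delta>(u)\<close> is then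
  read off from the odd part \<open>\<Phi>(u) - \<Phi>(-u) = 2\<beta>(k + u\<^sub>0)u\<^sup>3/3\<close>: if \<open>k + u\<^sub>0 > 0\<close> then
  \<open>\<Phi>(\<delta>(u)) = \<Phi>(u) > \<Phi>(-u)\<close>, so \<open>\<delta>(u) < -u\<close> by monotonicity on \<open>[u\<^sub>0, 0]\<close>, and symmetrically
  if \<open>k + u\<^sub>0 < 0\<close>. In the first case \<open>-u\<close> lies in \<open>[u\<^sub>0, 0]\<close> because \<open>u\<^sub>1 < -u\<^sub>0\<close>, which follows
  from \<open>\<Phi>(-u\<^sub>0) > \<Phi>(u\<^sub>0) = \<Phi>(u\<^sub>1)\<close>.\<close>

lemma strict_mono_on_ex1_preimage:
  fixes f :: "'a::linear_continuum_topology \<Rightarrow> 'b::linorder_topology"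
  assumes "a \<le> b" "continuous_on {a..b} f" "strict_mono_on {a..b} f" "f a < y" "y < f b"
  shows "\<exists>!x. a < x \<and> x < b \<and> f x = y"
proof -
  obtain x where x: "a \<le> x" "x \<le> b" "f x = y"
    using IVT'[of f a y b] assms by (auto intro: order.strict_implies_order)
  with assms(4,5) have "a < x" "x < b"
    by (auto simp: order.order_iff_strict)
  moreover have "z = x" if "a < z" "z < b" "f z = y" for z
    using strict_mono_on_eqD[OF assms(3), of x z] x that by (auto simp: less_imp_le)
  ultimately show ?thesis
    using x by blast
qed

lemma strict_antimono_on_ex1_preimage:
  fixes f :: "'a::linear_continuum_topology \<Rightarrow> 'b::linorder_topology"
  assumes "a \<le> b" "continuous_on {a..b} f" "strict_antimono_on {a..b} f" "f b < y" "y < f a"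
  shows "\<exists>!x. a < x \<and> x < b \<and> f x = y"
proof -
  obtain x where x: "a \<le> x" "x \<le> b" "f x = y"
    using IVT2'[of f b y a] assms by (auto intro: order.strict_implies_order)
  with assms(4,5) have "a < x" "x < b"
    by (auto simp: order.order_iff_strict)
  moreover have "inj_on f {a..b}"
    using assms(3) strict_antimono_iff_antimono by blast
  then have "z = x" if "a < z" "z < b" "f z = y" for z
    using x that by (auto simp: less_imp_le dest: inj_onD)
  ultimately show ?thesis
    using x by blast
qed

lemma strict_antimono_on_less_iff:
  fixes f :: "'a::linorder \<Rightarrow> 'b::order"
  assumes "strict_antimono_on S f" "x \<in> S" "y \<in> S"
  shows "f x < f y \<longleftrightarrow> y < x"
  using assms by (cases x y rule: linorder_cases) (auto dest: monotone_onD)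

lemma continuous_on_Phi: "continuous_on S (Phi \<beta> k u0)"
  unfolding Phi_def by (intro continuous_intros) auto

lemma Phi_has_real_derivative:
  "(Phi \<beta> k u0 has_real_derivative \<beta> * x * (k - x) * (x - u0)) (at x)"
proof -
  have "(Phi \<beta> k u0 has_real_derivative \<beta> * (- (x ^ 3) + (k + u0) * x\<^sup>2 - k * u0 * x)) (at x)"
    unfolding Phi_def by (rule derivative_eq_intros refl | simp)+
  then show ?thesis
    by (simp add: algebra_simps power2_eq_square power3_eq_cube)
qed

lemma Phi_strict_mono_on:
  assumes "\<beta> > 0" "u0 \<le> 0"
  shows "strict_mono_on {0..k} (Phi \<beta> k u0)"
proof (rule strict_mono_onI)
  fix a b assume "a \<in> {0..k}" "b \<in> {0..k}" "a < b"
  then show "Phi \<beta> k u0 a < Phi \<beta> k u0 b"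
    using assms
    by (intro DERIV_pos_imp_increasing_open[OF \<open>a < b\<close> _ continuous_on_Phi])
      (auto intro!: exI Phi_has_real_derivative mult_pos_pos)
qed

lemma Phi_strict_antimono_on:
  assumes "\<beta> > 0" "k \<ge> 0"
  shows "strict_antimono_on {u0..0} (Phi \<beta> k u0)"
proof (rule monotone_onI)
  fix a b assume "a \<in> {u0..0}" "b \<in> {u0..0}" "a < b"
  then show "Phi \<beta> k u0 b < Phi \<beta> k u0 a"
    using assms
    by (intro DERIV_neg_imp_decreasing_open[OF \<open>a < b\<close> _ continuous_on_Phi])
      (auto intro!: exI Phi_has_real_derivative simp: mult_less_0_iff)
qed

lemma Phi_0 [simp]: "Phi \<beta> k u0 0 = 0"
  by (simp add: Phi_def)

lemma Phi_minus_Phi_uminus: "Phi \<beta> k u0 u - Phi \<beta> k u0 (- u) = 2 * \<beta> * (k + u0) * u ^ 3 / 3"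
  unfolding Phi_def by (simp add: field_simps)

lemma Phi_k_minus_Phi_u0: "Phi \<beta> k u0 k - Phi \<beta> k u0 u0 = \<beta> * (k + u0) * (k - u0) ^ 3 / 12"
  unfolding Phi_def by (simp add: field_simps) algebra

lemma u1_props:
  assumes "\<beta> > 0" "- k < u0" "u0 < 0"
  shows "0 < u1 \<beta> k u0" "u1 \<beta> k u0 < k" "Phi \<beta> k u0 (u1 \<beta> k u0) = Phi \<beta> k u0 u0"
proof -
  have "Phi \<beta> k u0 0 < Phi \<beta> k u0 u0"
    using monotone_onD[OF Phi_strict_antimono_on, of \<beta> k u0 u0 0] assms by simp
  moreover have "0 < \<beta> * (k + u0) * (k - u0) ^ 3 / 12"
    using assms by simp
  then have "Phi \<beta> k u0 u0 < Phi \<beta> k u0 k"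
    using Phi_k_minus_Phi_u0[of \<beta> k u0] by linarith
  ultimately have "\<exists>!u. 0 < u \<and> u < k \<and> Phi \<beta> k u0 u = Phi \<beta> k u0 u0"
    using assms
    by (intro strict_mono_on_ex1_preimage continuous_on_Phi Phi_strict_mono_on) auto
  from theI'[OF this] show "0 < u1 \<beta> k u0" "u1 \<beta> k u0 < k"
      "Phi \<beta> k u0 (u1 \<beta> k u0) = Phi \<beta> k u0 u0"
    unfolding u1_def by auto
qed

lemma u1_less_uminus_u0:
  assumes "\<beta> > 0" "- k < u0" "u0 < 0"
  shows "u1 \<beta> k u0 < - u0"
proof -
  have "0 < 2 * \<beta> * (k + u0) * (- u0) ^ 3 / 3"
    using assms by (intro divide_pos_pos mult_pos_pos zero_less_power) auto
  then have "Phi \<beta> k u0 (u1 \<beta> k u0) < Phi \<beta> k u0 (- u0)"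
    using Phi_minus_Phi_uminus[of \<beta> k u0 "- u0"] u1_props[OF assms] by simp
  moreover have "u1 \<beta> k u0 \<in> {0..k}" "- u0 \<in> {0..k}"
    using u1_props[OF assms] assms by auto
  ultimately show ?thesis
    using strict_mono_on_less[OF Phi_strict_mono_on[of \<beta> u0 k], of "u1 \<beta> k u0" "- u0"] assms
    by simp
qed

lemma delta_props_u0_gt:
  assumes "\<beta> > 0" "- k < u0" "u0 < 0" "0 < u" "u < u1 \<beta> k u0"
  shows "u0 < delta \<beta> k u0 u" "delta \<beta> k u0 u < 0"
    "Phi \<beta> k u0 (delta \<beta> k u0 u) = Phi \<beta> k u0 u"
proof -
  have "Phi \<beta> k u0 0 < Phi \<beta> k u0 u" "Phi \<beta> k u0 u < Phi \<beta> k u0 (u1 \<beta> k u0)"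
    using strict_mono_onD[OF Phi_strict_mono_on[of \<beta> u0 k], of 0 u]
      strict_mono_onD[OF Phi_strict_mono_on[of \<beta> u0 k], of u "u1 \<beta> k u0"]
      u1_props[OF assms(1-3)] assms
    by auto
  then have "\<exists>!w. u0 < w \<and> w < 0 \<and> Phi \<beta> k u0 w = Phi \<beta> k u0 u"
    using assms u1_props[OF assms(1-3)]
    by (intro strict_antimono_on_ex1_preimage continuous_on_Phi Phi_strict_antimono_on) auto
  from theI'[OF this] show "u0 < delta \<beta> k u0 u" "delta \<beta> k u0 u < 0"
      "Phi \<beta> k u0 (delta \<beta> k u0 u) = Phi \<beta> k u0 u"
    using assms unfolding delta_def by auto
qed

lemma w2_props:
  assumes "\<beta> > 0" "k > 0" "u0 < - k"
  shows "u0 < w2 \<beta> k u0" "w2 \<beta> k u0 < 0" "Phi \<beta> k u0 (w2 \<beta> k u0) = Phi \<beta> k u0 k"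
proof -
  have "Phi \<beta> k u0 0 < Phi \<beta> k u0 k"
    using strict_mono_onD[OF Phi_strict_mono_on[of \<beta> u0 k], of 0 k] assms by simp
  moreover have "\<beta> * (k + u0) * (k - u0) ^ 3 / 12 < 0"
    using assms by (intro divide_neg_pos mult_neg_pos mult_pos_neg zero_less_power) auto
  then have "Phi \<beta> k u0 k < Phi \<beta> k u0 u0"
    using Phi_k_minus_Phi_u0[of \<beta> k u0] by linarith
  ultimately have "\<exists>!w. u0 < w \<and> w < 0 \<and> Phi \<beta> k u0 w = Phi \<beta> k u0 k"
    using assms
    by (intro strict_antimono_on_ex1_preimage continuous_on_Phi Phi_strict_antimono_on) auto
  from theI'[OF this] show "u0 < w2 \<beta> k u0" "w2 \<beta> k u0 < 0"
      "Phi \<beta> k u0 (w2 \<beta> k u0) = Phi \<beta> k u0 k"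
    unfolding w2_def by auto
qed

lemma delta_props_u0_lt:
  assumes "\<beta> > 0" "k > 0" "u0 < - k" "0 < u" "u < k"
  shows "w2 \<beta> k u0 < delta \<beta> k u0 u" "delta \<beta> k u0 u < 0"
    "Phi \<beta> k u0 (delta \<beta> k u0 u) = Phi \<beta> k u0 u"
proof -
  have "Phi \<beta> k u0 0 < Phi \<beta> k u0 u" "Phi \<beta> k u0 u < Phi \<beta> k u0 k"
    using strict_mono_onD[OF Phi_strict_mono_on[of \<beta> u0 k], of 0 u]
      strict_mono_onD[OF Phi_strict_mono_on[of \<beta> u0 k], of u k] assms
    by auto
  moreover have "strict_antimono_on {w2 \<beta> k u0..0} (Phi \<beta> k u0)"
    using monotone_on_subset[OF Phi_strict_antimono_on[of \<beta> k u0]] w2_props[OF assms(1-3)] assms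
    by simp
  ultimately have "\<exists>!w. w2 \<beta> k u0 < w \<and> w < 0 \<and> Phi \<beta> k u0 w = Phi \<beta> k u0 u"
    using w2_props[OF assms(1-3)]
    by (intro strict_antimono_on_ex1_preimage continuous_on_Phi) auto
  from theI'[OF this] show "w2 \<beta> k u0 < delta \<beta> k u0 u" "delta \<beta> k u0 u < 0"
      "Phi \<beta> k u0 (delta \<beta> k u0 u) = Phi \<beta> k u0 u"
    using assms unfolding delta_def by auto
qed

lemma add_delta_neg:
  assumes "\<beta> > 0" "- k < u0" "u0 < 0" "0 < u" "u < u1 \<beta> k u0"
  shows "u + delta \<beta> k u0 u < 0"
proof -
  note delta = delta_props_u0_gt[OF assms]
  have "0 < 2 * \<beta> * (k + u0) * u ^ 3 / 3"
    using assms by (intro divide_pos_pos mult_pos_pos zero_less_power) auto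
  then have "Phi \<beta> k u0 (- u) < Phi \<beta> k u0 (delta \<beta> k u0 u)"
    using Phi_minus_Phi_uminus[of \<beta> k u0 u] delta(3) by simp
  moreover have "- u \<in> {u0..0}" "delta \<beta> k u0 u \<in> {u0..0}"
    using u1_less_uminus_u0[OF assms(1-3)] delta assms by auto
  ultimately show ?thesis
    using strict_antimono_on_less_iff[OF Phi_strict_antimono_on[of \<beta> k u0]] assms by simp
qed

lemma add_delta_pos:
  assumes "\<beta> > 0" "k > 0" "u0 < - k" "0 < u" "u < k"
  shows "u + delta \<beta> k u0 u > 0"
proof -
  note delta = delta_props_u0_lt[OF assms]
  have "2 * \<beta> * (k + u0) * u ^ 3 / 3 < 0"
    using assms by (intro divide_neg_pos mult_neg_pos mult_pos_neg zero_less_power) auto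
  then have "Phi \<beta> k u0 (delta \<beta> k u0 u) < Phi \<beta> k u0 (- u)"
    using Phi_minus_Phi_uminus[of \<beta> k u0 u] delta(3) by simp
  moreover have "- u \<in> {u0..0}" "delta \<beta> k u0 u \<in> {u0..0}"
    using w2_props[OF assms(1-3)] delta assms by auto
  ultimately show ?thesis
    using strict_antimono_on_less_iff[OF Phi_strict_antimono_on[of \<beta> k u0]] assms by simp
qed

theorem lemma3p5:
  fixes \<beta> k u0 :: real
  assumes "\<beta> > 0" and "k > 0" and "u0 < 0"
  shows "(- k < u0 \<longrightarrow> (\<forall>u. 0 < u \<and> u < u1 \<beta> k u0 \<longrightarrow> u + delta \<beta> k u0 u < 0))
       \<and> (u0 < - k \<longrightarrow> (\<forall>u. 0 < u \<and> u < k \<longrightarrow> u + delta \<beta> k u0 u > 0))"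
  using add_delta_neg[of \<beta> k u0] add_delta_pos[of \<beta> k u0] assms by blast

end
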